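(* Let $p$ be a prime number, let $u \geqslant 1$ and $n \geqslant m \geqslant 1$ be integers, and let $$f(x) = a_{n}x^{n} + a_{n-1}x^{n-1} + \cdots + a_{m}x^{m} + p^{u} \in \mathbb{Z}[x]$$ with $a_n \neq 0$. Suppose that $p \nmid a_{m}$, that $\gcd(u, m) = 1$, and that $$p^{u} > |a_{n}| + |a_{n-1}| + \cdots + |a_{m}|.$$ Then $f(x)$ is irreducible over $\mathbb{Q}$. *)

theory Defs
  imports "HOL-Computational_Algebra.Computational_Algebra"
begin

end

theory Submission
  imports Defs "Berlekamp_Zassenhaus.Factor_Bound"
begin

text \<open>
  Since p^u dominates the other coefficients, f has no complex root in the closed unit disk.
  So if f = g h with g, h nonconstant integer polynomials, then |g(0)| and |h(0)| are products of
  a nonzero integer leading coefficient and roots of modulus > 1, hence > 1; as g(0) h(0) = p^u,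
  p divides both. This contradicts Dumas' criterion: the p-adic Newton polygon of f is the single
  segment from (0, u) to (m, 0), which meets no other lattice point because gcd(u, m) = 1, whereas
  p dividing both constant terms would split it at an interior lattice point. The Newton polygon
  is handled through the linear weight m v_p(c_k) + u k, whose minimum over the support of a
  polynomial is additive under multiplication.
\<close>

hide_const (open) UnivPoly.monom up_ring.coeff module.smult

lemma obtain_last_minimizer:
  fixes w :: "nat \<Rightarrow> 'b::linorder"
  assumes "finite S" "S \<noteq> {}"
  obtains k where "k \<in> S" "\<And>i. i \<in> S \<Longrightarrow> w k \<le> w i" "\<And>i. i \<in> S \<Longrightarrow> k < i \<Longrightarrow> w k < w i"
proof -
  define T where "T = {k \<in> S. w k = Min (w ` S)}"
  have "Min (w ` S) \<in> w ` S" using assms by (intro Min_in) auto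
  then obtain k0 where "k0 \<in> S" "w k0 = Min (w ` S)" by auto
  hence "finite T" "T \<noteq> {}" using assms by (auto simp: T_def)
  hence k: "Max T \<in> S" "w (Max T) = Min (w ` S)"
    using Max_in T_def by blast+
  have "w (Max T) < w i" if "i \<in> S" "Max T < i" for i
  proof -
    have "i \<notin> T" using that \<open>finite T\<close> Max_ge leD by blast
    moreover have "Min (w ` S) \<le> w i" using assms that by simp
    ultimately show ?thesis using that k by (auto simp: T_def)
  qed
  with k assms show thesis by (intro that[of "Max T"]) auto
qed

text \<open>
  The weight of the point (k, v_P(c_k)) of the Newton polygon under the linear form M y + U x;
  for M = m and U = u it is constant, equal to m u, along the segment from (0, u) to (m, 0).
\<close>

definition coeff_weight :: "'a::factorial_semiring \<Rightarrow> nat \<Rightarrow> nat \<Rightarrow> 'a poly \<Rightarrow> nat \<Rightarrow> nat" where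
  "coeff_weight P M U g k = M * multiplicity P (coeff g k) + U * k"

lemma multiplicity_coeff_mult_at_last_minimizers:
  fixes P :: "'a::{factorial_semiring, idom}" and g h :: "'a poly" and M U k l :: nat
  defines "w \<equiv> coeff_weight P M U"
  assumes P: "prime_elem P" and "M > 0"
    and g: "coeff g k \<noteq> 0" "\<And>i. coeff g i \<noteq> 0 \<Longrightarrow> w g k \<le> w g i"
           "\<And>i. coeff g i \<noteq> 0 \<Longrightarrow> k < i \<Longrightarrow> w g k < w g i"
    and h: "coeff h l \<noteq> 0" "\<And>j. coeff h j \<noteq> 0 \<Longrightarrow> w h l \<le> w h j"
           "\<And>j. coeff h j \<noteq> 0 \<Longrightarrow> l < j \<Longrightarrow> w h l < w h j"
  shows "coeff (g * h) (k + l) \<noteq> 0"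
    and "multiplicity P (coeff (g * h) (k + l)) = multiplicity P (coeff g k) + multiplicity P (coeff h l)"
proof -
  define v where "v = multiplicity P"
  define N where "N = k + l"
  define e where "e = v (coeff g k) + v (coeff h l)"
  define t where "t = (\<lambda>i. coeff g i * coeff h (N - i))"
  have split: "coeff (g * h) N = t k + (\<Sum>i\<in>{..N} - {k}. t i)"
    unfolding coeff_mult t_def by (subst sum.remove[of _ k]) (auto simp: N_def)
  have tk: "t k \<noteq> 0" "v (t k) = e"
    using g(1) h(1) P by (simp_all add: t_def N_def e_def v_def prime_elem_multiplicity_mult_distrib)
  have "P ^ Suc e dvd t i" if i: "i \<in> {..N} - {k}" for i
  proof (cases "coeff g i = 0 \<or> coeff h (N - i) = 0")
    case True thus ?thesis by (auto simp: t_def)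
  next
    case False
    hence gi: "coeff g i \<noteq> 0" and hi: "coeff h (N - i) \<noteq> 0" by auto
    \<comment> \<open>k and l are the last minimizers, so every other term has strictly larger total weight\<close>
    have "w g k + w h l < w g i + w h (N - i)"
    proof (cases "i < k")
      case True
      hence "l < N - i" by (simp add: N_def)
      with h(3)[OF hi] g(2)[OF gi] show ?thesis by simp
    next
      case False
      with i have "k < i" by auto
      with g(3)[OF gi] h(2)[OF hi] show ?thesis by simp
    qed
    moreover have "U * k + U * l = U * i + U * (N - i)"
      using i by (simp add: N_def add_mult_distrib2[symmetric])
    ultimately have "M * e < M * (v (coeff g i) + v (coeff h (N - i)))"
      by (simp add: w_def coeff_weight_def e_def v_def algebra_simps)
    hence "Suc e \<le> v (coeff g i) + v (coeff h (N - i))"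
      by (simp add: Suc_le_eq)
    moreover have "P ^ (v (coeff g i) + v (coeff h (N - i))) dvd t i"
      unfolding t_def power_add v_def by (intro mult_dvd_mono multiplicity_dvd)
    ultimately show ?thesis by (meson dvd_trans le_imp_power_dvd)
  qed
  hence rest: "P ^ Suc e dvd (\<Sum>i\<in>{..N} - {k}. t i)" by (intro dvd_sum)
  have "P ^ e dvd t k"
    using multiplicity_dvd[of P "t k"] tk(2) by (simp add: v_def)
  moreover have "\<not> P ^ Suc e dvd t k"
    using multiplicity_geI[OF tk(1) prime_elem_not_unit[OF P], of "Suc e"] tk(2) by (auto simp: v_def)
  ultimately have "P ^ e dvd coeff (g * h) N" and ndvd: "\<not> P ^ Suc e dvd coeff (g * h) N"
    using rest dvd_trans[OF le_imp_power_dvd[of e "Suc e"] rest]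
    by (auto simp: split dvd_add_left_iff)
  hence "v (coeff (g * h) N) = e" unfolding v_def by (rule multiplicity_eqI)
  thus "v (coeff (g * h) (k + l)) = v (coeff g k) + v (coeff h l)"
    unfolding N_def e_def .
  show "coeff (g * h) (k + l) \<noteq> 0"
    using ndvd unfolding N_def by (metis dvd_0_right)
qed

lemma coeff_weight_mult_minimal:
  fixes P :: "'a::{factorial_semiring, idom}" and g h :: "'a poly" and M U :: nat
  defines "w \<equiv> coeff_weight P M U"
  assumes "prime_elem P" "M > 0" "g \<noteq> 0" "h \<noteq> 0"
  obtains k l where "coeff g k \<noteq> 0" "\<And>i. coeff g i \<noteq> 0 \<Longrightarrow> w g k \<le> w g i"
    and "coeff h l \<noteq> 0" "\<And>j. coeff h j \<noteq> 0 \<Longrightarrow> w h l \<le> w h j"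
    and "coeff (g * h) (k + l) \<noteq> 0" "w (g * h) (k + l) = w g k + w h l"
proof -
  define S where "S q = {i. coeff q i \<noteq> 0}" for q :: "'a poly"
  have fin: "finite (S q)" for q
    by (rule finite_subset[of _ "{..degree q}"]) (auto simp: S_def intro: le_degree)
  have ne: "S q \<noteq> {}" if "q \<noteq> 0" for q
    using that by (auto simp: S_def intro!: exI[of _ "degree q"])
  obtain k where "k \<in> S g" "\<And>i. i \<in> S g \<Longrightarrow> w g k \<le> w g i"
    "\<And>i. i \<in> S g \<Longrightarrow> k < i \<Longrightarrow> w g k < w g i"
    using obtain_last_minimizer[OF fin ne[OF \<open>g \<noteq> 0\<close>], of "w g"] by blast
  moreover obtain l where "l \<in> S h" "\<And>j. j \<in> S h \<Longrightarrow> w h l \<le> w h j"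
    "\<And>j. j \<in> S h \<Longrightarrow> l < j \<Longrightarrow> w h l < w h j"
    using obtain_last_minimizer[OF fin ne[OF \<open>h \<noteq> 0\<close>], of "w h"] by blast
  ultimately show thesis
    using multiplicity_coeff_mult_at_last_minimizers[OF assms(2,3), of g k U h l]
    by (intro that[of k l]) (auto simp: S_def w_def coeff_weight_def algebra_simps)
qed

lemma dvd_coeff_mult_below:
  fixes P :: "'a::comm_semiring_1" and g h :: "'a poly"
  assumes "\<And>k. k < i \<Longrightarrow> P dvd coeff g k" "\<And>k. k < j \<Longrightarrow> P dvd coeff h k" "N < i + j"
  shows "P dvd coeff (g * h) N"
  unfolding coeff_mult
proof (intro dvd_sum)
  fix k assume "k \<in> {..N}"
  with assms show "P dvd coeff g k * coeff h (N - k)"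
    by (cases "k < i") simp_all
qed

lemma not_dvd_coeff_mult_obtain_not_dvd_coeffs:
  fixes P :: "'a::comm_semiring_1" and g h :: "'a poly"
  assumes "\<not> P dvd coeff (g * h) N"
  obtains i j where "i + j \<le> N" "\<not> P dvd coeff g i" "\<not> P dvd coeff h j"
proof -
  have "\<exists>i. \<not> P dvd coeff g i"
    using assms dvd_coeff_mult_below[of "Suc N" P g 0 h N] by auto
  hence "\<not> P dvd coeff g (LEAST i. \<not> P dvd coeff g i)" by (rule LeastI_ex)
  moreover have "\<exists>j. \<not> P dvd coeff h j"
    using assms dvd_coeff_mult_below[of 0 P g "Suc N" h N] by auto
  hence "\<not> P dvd coeff h (LEAST j. \<not> P dvd coeff h j)" by (rule LeastI_ex)
  moreover have "(LEAST i. \<not> P dvd coeff g i) + (LEAST j. \<not> P dvd coeff h j) \<le> N"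
  proof (rule ccontr)
    assume "\<not> ?thesis"
    hence "P dvd coeff (g * h) N"
      by (intro dvd_coeff_mult_below) (auto dest: not_less_Least simp: not_le)
    with assms show False ..
  qed
  ultimately show thesis using that by blast
qed

lemma coeff_weight_ge_if_single_edge:
  fixes P :: "'a::factorial_semiring" and f :: "'a poly" and u m :: nat
  assumes "P \<noteq> 0" "\<not> is_unit P" "coeff f 0 = P ^ u"
    and "\<And>k. 0 < k \<Longrightarrow> k < m \<Longrightarrow> coeff f k = 0" and "coeff f N \<noteq> 0"
  shows "m * u \<le> coeff_weight P m u f N"
proof (cases "N = 0")
  case True
  thus ?thesis using assms(1-3) by (simp add: coeff_weight_def multiplicity_same_power)
next
  case False
  with assms(4,5) have "m \<le> N" by (meson not_le neq0_conv)
  thus ?thesis by (simp add: coeff_weight_def mult.commute trans_le_add2)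
qed

lemma coprime_mult_eq_imp_0_or_eq:
  fixes u m s i :: nat
  assumes "gcd u m = 1" "m * s = u * i" "i \<le> m"
  shows "i = 0 \<or> i = m"
proof -
  have "m dvd i * u" using assms(2) by (metis dvd_triv_left mult.commute)
  moreover have "gcd m u = 1" using assms(1) by (simp add: gcd.commute)
  ultimately have "m dvd i"
    by (simp add: coprime_dvd_mult_left_iff[OF coprime_iff_gcd_eq_1[THEN iffD2]])
  thus ?thesis using assms(3) by (auto dest: dvd_imp_le)
qed

lemma single_edge_coeff_0_not_both_dvd:
  fixes P :: "'a::{factorial_semiring, idom}" and g h :: "'a poly" and u m :: nat
  assumes P: "prime_elem P" and "m \<ge> 1" and "gcd u m = 1"
    and f0: "coeff (g * h) 0 = P ^ u"
    and gap: "\<And>k. 0 < k \<Longrightarrow> k < m \<Longrightarrow> coeff (g * h) k = 0"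
    and fm: "\<not> P dvd coeff (g * h) m"
  shows "\<not> (P dvd coeff g 0 \<and> P dvd coeff h 0)"
proof
  assume dvd0: "P dvd coeff g 0 \<and> P dvd coeff h 0"
  define v where "v = multiplicity P"
  define w where "w = coeff_weight P m u"
  have Pu: "P \<noteq> 0" "\<not> is_unit P" using P by (auto simp: prime_elem_def)
  have g0h0: "coeff g 0 * coeff h 0 = P ^ u" using f0 by (simp add: coeff_mult_0)
  hence nz: "coeff g 0 \<noteq> 0" "coeff h 0 \<noteq> 0" using Pu by auto
  define s where "s = v (coeff g 0)"
  define t where "t = v (coeff h 0)"
  have "s \<ge> 1" "t \<ge> 1"
    using dvd0 nz P by (simp_all add: s_def t_def v_def Suc_le_eq prime_multiplicity_gt_zero_iff)
  have "s + t = u"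
    using arg_cong[OF g0h0, of v] nz P Pu
    by (simp add: s_def t_def v_def prime_elem_multiplicity_mult_distrib multiplicity_same_power)
  obtain i j where "i + j \<le> m" and vi: "v (coeff g i) = 0" "coeff g i \<noteq> 0"
    and vj: "v (coeff h j) = 0" "coeff h j \<noteq> 0"
    using not_dvd_coeff_mult_obtain_not_dvd_coeffs[OF fm]
    by (metis dvd_0_right not_dvd_imp_multiplicity_0 v_def)
  have "m > 0" "g \<noteq> 0" "h \<noteq> 0" using nz \<open>m \<ge> 1\<close> by auto
  obtain k l where "coeff g k \<noteq> 0" and k: "\<And>i. coeff g i \<noteq> 0 \<Longrightarrow> w g k \<le> w g i"
    and "coeff h l \<noteq> 0" and l: "\<And>j. coeff h j \<noteq> 0 \<Longrightarrow> w h l \<le> w h j"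
    and kl: "coeff (g * h) (k + l) \<noteq> 0" "w (g * h) (k + l) = w g k + w h l"
    using coeff_weight_mult_minimal[OF P \<open>m > 0\<close> \<open>g \<noteq> 0\<close> \<open>h \<noteq> 0\<close>, where U = u]
    unfolding w_def by blast
  have "m * u \<le> w (g * h) (k + l)"
    using coeff_weight_ge_if_single_edge[OF Pu f0 gap kl(1)] by (simp add: w_def)
  moreover have "w g k \<le> m * s" "w h l \<le> m * t"
    using k[OF nz(1)] l[OF nz(2)] by (simp_all add: w_def coeff_weight_def s_def t_def v_def)
  moreover have "w g k \<le> u * i" "w h l \<le> u * j"
    using k[OF vi(2)] l[OF vj(2)] vi(1) vj(1) by (simp_all add: w_def coeff_weight_def v_def)
  moreover have "m * s + m * t = m * u" "u * i + u * j \<le> m * u"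
    using \<open>s + t = u\<close> mult_le_mono1[OF \<open>i + j \<le> m\<close>, of u]
    by (auto simp: algebra_simps simp flip: add_mult_distrib2)
  \<comment> \<open>so the segment of the Newton polygon of g from (0, s) to (i, 0) is parallel to that of f\<close>
  ultimately have "m * s = u * i" using kl(2) by linarith
  moreover have "i \<noteq> 0"
    using \<open>m * s = u * i\<close> \<open>m \<ge> 1\<close> \<open>s \<ge> 1\<close> by (metis mult_is_0 not_one_le_zero)
  moreover have "i \<le> m" using \<open>i + j \<le> m\<close> by simp
  ultimately have "i = m"
    using coprime_mult_eq_imp_0_or_eq[OF \<open>gcd u m = 1\<close> \<open>m * s = u * i\<close>] by simp
  with \<open>m * s = u * i\<close> \<open>m \<ge> 1\<close> \<open>s + t = u\<close> \<open>t \<ge> 1\<close> show False by simp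
qed

lemma poly_nonzero_if_coeff_0_dominates:
  fixes p :: "'a::real_normed_field poly" and z :: 'a
  assumes dom: "(\<Sum>k = 1..degree p. norm (coeff p k)) < norm (coeff p 0)" and "norm z \<le> 1"
  shows "poly p z \<noteq> 0"
proof
  assume "poly p z = 0"
  moreover have "poly p z = coeff p 0 + (\<Sum>k = 1..degree p. coeff p k * z ^ k)"
    unfolding poly_altdef by (simp add: atMost_atLeast0 sum.atLeast_Suc_atMost)
  ultimately have "norm (coeff p 0) = norm (\<Sum>k = 1..degree p. coeff p k * z ^ k)"
    by (metis add_eq_0_iff norm_minus_cancel)
  also have "\<dots> \<le> (\<Sum>k = 1..degree p. norm (coeff p k) * norm z ^ k)"
    by (rule order.trans[OF norm_sum]) (simp add: norm_mult norm_power)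
  also have "\<dots> \<le> (\<Sum>k = 1..degree p. norm (coeff p k))"
    using \<open>norm z \<le> 1\<close> by (intro sum_mono mult_left_le power_le_one) auto
  finally show False using dom by simp
qed

lemma abs_coeff_0_gt_1_if_no_roots_in_unit_disk:
  fixes g :: "int poly"
  assumes "degree g > 0" and roots: "\<And>z::complex. norm z \<le> 1 \<Longrightarrow> poly (of_int_poly g) z \<noteq> 0"
  shows "\<bar>coeff g 0\<bar> > 1"
proof -
  define gc where "gc = (of_int_poly g :: complex poly)"
  have dgc: "degree gc = degree g" unfolding gc_def by simp
  obtain r where dec: "smult (lead_coeff gc) (\<Prod>i<degree gc. [:-r i, 1:]) = gc"
    using complex_poly_decompose' by blast
  have "norm (r i) > 1" if "i < degree gc" for i
  proof -
    have "poly gc (r i) = lead_coeff gc * (\<Prod>j<degree gc. r i - r j)"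
      by (subst dec[symmetric]) (simp add: poly_prod)
    also have "\<dots> = 0" using that by (auto intro!: prod_zero)
    finally show ?thesis using roots[of "r i"] unfolding gc_def by linarith
  qed
  hence "(\<Prod>i<degree gc. 1) < (\<Prod>i<degree gc. norm (r i))"
    using \<open>degree g > 0\<close> dgc by (intro prod_mono_strict[of 0]) (auto simp: less_imp_le, fastforce)
  moreover have "norm (lead_coeff gc) \<ge> 1"
  proof -
    have "\<bar>lead_coeff g\<bar> \<ge> 1" using \<open>degree g > 0\<close> by (auto simp: int_one_le_iff_zero_less)
    thus ?thesis by (simp del: of_int_abs add: gc_def dgc[unfolded gc_def])
  qed
  moreover have "coeff gc 0 = lead_coeff gc * (\<Prod>i<degree gc. - r i)"
    by (subst dec[symmetric]) (simp add: poly_0_coeff_0[symmetric] poly_prod)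
  hence "norm (coeff gc 0) = norm (lead_coeff gc) * (\<Prod>i<degree gc. norm (r i))"
    by (simp add: norm_mult prod_norm[symmetric])
  ultimately have "norm (coeff gc 0) > 1"
    unfolding prod.neutral_const
    by (metis less_1_mult less_le_trans mult_le_cancel_right1 not_le)
  thus ?thesis by (simp add: gc_def)
qed

lemma prime_dvd_coeff_0_if_no_roots_in_unit_disk:
  fixes P :: int and g h :: "int poly"
  assumes "prime P" "coeff (g * h) 0 = P ^ u" "degree g > 0"
    and "\<And>z::complex. norm z \<le> 1 \<Longrightarrow> poly (of_int_poly g) z \<noteq> 0"
  shows "P dvd coeff g 0"
proof -
  have "coeff g 0 dvd P ^ u" using assms(2) by (metis coeff_mult_0 dvd_triv_left)
  then obtain k where k: "normalize (coeff g 0) = P ^ k"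
    using divides_primepow[OF assms(1)] by metis
  moreover have "\<bar>coeff g 0\<bar> > 1"
    using assms(3,4) by (rule abs_coeff_0_gt_1_if_no_roots_in_unit_disk)
  ultimately have "k \<noteq> 0" by (cases "k = 0") auto
  with k have "P dvd normalize (coeff g 0)" by simp
  thus ?thesis by simp
qed

lemma coeff_sum_monom_plus_const:
  "coeff ((\<Sum>k = m..n. monom (a k) k) + [:c:]) i = (if m \<le> i \<and> i \<le> n then a i else 0) + (if i = 0 then c else 0)"
  by (auto simp: coeff_sum coeff_pCons split: nat.split)

theorem theorem1:
  fixes p u m n :: nat and a :: "nat \<Rightarrow> int" and f :: "int poly"
  assumes "prime p"
    and "u \<ge> 1" and "m \<ge> 1" and "n \<ge> m"
    and "f = (\<Sum>k = m..n. monom (a k) k) + [:int p ^ u:]"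
    and "a n \<noteq> 0"
    and "\<not> int p dvd a m"
    and "gcd u m = 1"
    and "int p ^ u > (\<Sum>k = m..n. \<bar>a k\<bar>)"
  shows "irreducible (map_poly (of_int :: int \<Rightarrow> rat) f)"
proof -
  have cf: "coeff f k = (if m \<le> k \<and> k \<le> n then a k else 0) + (if k = 0 then int p ^ u else 0)" for k
    unfolding assms(5) by (rule coeff_sum_monom_plus_const)
  have deg: "degree f = n"
    using cf assms(3,4,6) by (intro antisym degree_le le_degree) auto
  have "(\<Sum>k = 1..degree f. \<bar>coeff f k\<bar>) = (\<Sum>k = m..n. \<bar>a k\<bar>)"
    using assms(3,4) by (intro sum.mono_neutral_cong_right) (auto simp: deg cf)
  hence "(\<Sum>k = 1..degree f. \<bar>coeff f k\<bar>) < \<bar>coeff f 0\<bar>"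
    using assms(3,9) cf[of 0] by simp
  hence "(\<Sum>k = 1..degree f. norm (complex_of_int (coeff f k))) < norm (complex_of_int (coeff f 0))"
    by (simp only: norm_of_int of_int_abs[symmetric] of_int_sum[symmetric] of_int_less_iff)
  hence roots: "poly (of_int_poly f) z \<noteq> 0" if "norm z \<le> 1" for z :: complex
    using that by (intro poly_nonzero_if_coeff_0_dominates) simp_all
  have "irreducible\<^sub>d f"
  proof (rule irreducible\<^sub>dI)
    show "degree f > 0" using deg assms(3,4) by simp
    fix g h :: "int poly" assume "degree g > 0" "degree h > 0" "f = g * h"
    have "poly (of_int_poly g) z \<noteq> 0 \<and> poly (of_int_poly h) z \<noteq> 0" if "norm z \<le> 1" for z :: complex
      using roots[OF that] \<open>f = g * h\<close> by (simp add: of_int_poly_hom.hom_mult)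
    moreover have "coeff (g * h) 0 = int p ^ u" "coeff (h * g) 0 = int p ^ u"
      using cf[of 0] assms(3) \<open>f = g * h\<close> by (simp_all add: mult.commute)
    ultimately have "int p dvd coeff g 0 \<and> int p dvd coeff h 0"
      using assms(1) \<open>degree g > 0\<close> \<open>degree h > 0\<close>
      by (auto intro: prime_dvd_coeff_0_if_no_roots_in_unit_disk)
    moreover have "\<not> (int p dvd coeff g 0 \<and> int p dvd coeff h 0)"
      using \<open>f = g * h\<close> cf assms(1,3,4,7,8)
      by (intro single_edge_coeff_0_not_both_dvd) (auto simp: prime_imp_prime_elem)
    ultimately show False by blast
  qed
  thus ?thesis by (simp add: irreducible\<^sub>d_int_rat flip: irreducible_connect_field)
qed

end
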